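(* Let $J$ be a real symmetric $N\times N$ matrix with zero diagonal, and let $\lambda_1(J)$ denote its smallest eigenvalue. Let $\Delta$ be a real number with $\Delta \ge \Delta_{\min} := \max(0,-\lambda_1(J))$, and set $\tilde{J} := J + \Delta\, \mathbb{1}_{N\times N}$. If $x\in\mathbb{R}^N$ satisfies $x = \operatorname{sgn}(Jx)$ (the zero-temperature TAP / naive mean-field equation), then $x$ also satisfies $x = \operatorname{sgn}(\tilde{J}x)$ (the zero-temperature critical point equation of the Hamiltonian density).
   Context: $\operatorname{sgn}$ is applied componentwise to vectors, with $\operatorname{sgn}(t)=1$ for $t>0$, $\operatorname{sgn}(t)=-1$ for $t<0$ and $\operatorname{sgn}(0)=0$. $J$ is the coupling matrix of an Ising spin system with Hamiltonian $H=-\sum_i h_i s_i-\sum_{i<j}J_{ij}s_is_j$, and $\tilde J$ is the "shifted coupling matrix". *)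

theory Defs
  imports "HOL-Analysis.Analysis"
begin

definition mat_eigenvalues :: "real^'n^'n \<Rightarrow> real set" where
  "mat_eigenvalues A = {l. \<exists>v. v \<noteq> 0 \<and> A *v v = l *\<^sub>R v}"

text \<open>Smallest eigenvalue lambda_1(A) (meaningful for symmetric A).\<close>
definition smallest_eigenvalue :: "real^'n^'n \<Rightarrow> real" where
  "smallest_eigenvalue A = Min (mat_eigenvalues A)"

definition vec_sgn :: "real^'n \<Rightarrow> real^'n" where
  "vec_sgn v = (\<chi> i. sgn (v $ i))"

end

theory Submission
  imports Defs
begin

(* If x = sgn (J x), then the shift adds \<Delta> x to J x, i.e. it moves every component of J x
   further in the direction of its own sign and leaves zero components at zero; so the signs
   do not change as soon as \<Delta> \<ge> 0. *)

lemma sgn_add_scaled_sgn: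
  fixes y c :: real
  assumes "c \<ge> 0"
  shows "sgn (y + c * sgn y) = sgn y"
  using assms by (cases y "0 :: real" rule: linorder_cases) (auto simp: sgn_real_def)

lemma vec_sgn_add_scaled_vec_sgn:
  fixes y :: "real^'n"
  assumes "c \<ge> 0"
  shows "vec_sgn (y + c *\<^sub>R vec_sgn y) = vec_sgn y"
  using sgn_add_scaled_sgn[OF assms] by (simp add: vec_sgn_def vec_eq_iff)

lemma matrix_add_scaled_identity_mult:
  fixes A :: "real^'n^'n" and x :: "real^'n"
  shows "(A + c *\<^sub>R mat 1) *v x = A *v x + c *\<^sub>R x"
  by (simp add: matrix_vector_mult_add_rdistrib flip: scaleR_matrix_vector_assoc)

theorem proposition1:
  fixes J :: "real^'n^'n" and \<Delta> :: real and x :: "real^'n"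
  assumes "transpose J = J"
    and "\<forall>i. J $ i $ i = 0"
    and "\<Delta> \<ge> max 0 (- smallest_eigenvalue J)"
    and "x = vec_sgn (J *v x)"
  shows "x = vec_sgn ((J + \<Delta> *\<^sub>R mat 1) *v x)"
proof -
  have "\<Delta> \<ge> 0"
    using assms(3) by simp
  then have "vec_sgn (J *v x + \<Delta> *\<^sub>R vec_sgn (J *v x)) = vec_sgn (J *v x)"
    by (rule vec_sgn_add_scaled_vec_sgn)
  then show ?thesis
    using assms(4) by (simp add: matrix_add_scaled_identity_mult)
qed

end
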